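(* Let $X=(-\frac12,\frac12)^{\mathbb N}$ with the product $\sigma$-algebra and the product probability measure $\mu$ generated by Lebesgue measure on $(-\frac12,\frac12)$. Then $\mu(S\cap X)=1$ and $\mu(c_0\cap X)=\mu(c\cap X)=\mu(\widehat{c_0}\cap X)=0$.
   Context: $\ell^\infty$ is the space of bounded real sequences; $c$ and $c_0$ are the sets of convergent sequences and of sequences convergent to $0$. A Banach limit is a linear functional $L\colon\ell^\infty\to\mathbb R$ such that for every $(x_n)\in\ell^\infty$: (1) if $x_n\ge0$ for all $n$ then $L((x_n))\ge0$; (2) $L((x_2,x_3,\dots))=L((x_1,x_2,\dots))$; (3) $L((1,1,\dots))=1$. $\widehat{c_0}$ is the set of $x\in\ell^\infty$ with $L(x)=0$ for every Banach limit $L$. $S=\{x\in\ell^\infty\colon\lim_n\frac{x_1+\dots+x_n}{n}\text{ exists}\}$. *)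

theory Defs
  imports "HOL-Probability.Probability"
begin

text \<open>Real sequences are functions nat => real; index 0 plays the role of index 1.\<close>

definition linf :: "(nat \<Rightarrow> real) set" where
  "linf = {x. bounded (range x)}"

definition conv_seqs :: "(nat \<Rightarrow> real) set" where
  "conv_seqs = {x. convergent x}"

definition null_seqs :: "(nat \<Rightarrow> real) set" where
  "null_seqs = {x. x \<longlonglongrightarrow> 0}"

definition banach_limit :: "((nat \<Rightarrow> real) \<Rightarrow> real) \<Rightarrow> bool" where
  "banach_limit L \<longleftrightarrow>
     (\<forall>x\<in>linf. \<forall>y\<in>linf. L (\<lambda>n. x n + y n) = L x + L y) \<and>
     (\<forall>a::real. \<forall>x\<in>linf. L (\<lambda>n. a * x n) = a * L x) \<and>
     (\<forall>x\<in>linf. (\<forall>n. x n \<ge> 0) \<longrightarrow> L x \<ge> 0) \<and>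
     (\<forall>x\<in>linf. L (\<lambda>n. x (Suc n)) = L x) \<and>
     L (\<lambda>n. 1) = 1"

definition c0_hat :: "(nat \<Rightarrow> real) set" where
  "c0_hat = {x\<in>linf. \<forall>L. banach_limit L \<longrightarrow> L x = 0}"

definition cesaro_seqs :: "(nat \<Rightarrow> real) set" where
  "cesaro_seqs = {x\<in>linf. convergent (\<lambda>n. (\<Sum>i<Suc n. x i) / real (Suc n))}"

definition cube :: "(nat \<Rightarrow> real) set" where
  "cube = {x. \<forall>n. x n \<in> {-1/2<..<1/2}}"

definition mu :: "(nat \<Rightarrow> real) measure" where
  "mu = PiM UNIV (\<lambda>_. uniform_measure lborel {-1/2<..<(1/2::real)})"

end

theory Submission
  imports Defs
begin

(* Hoeffding's inequality
   and Borel-Cantelli give the strong law of large numbers, so Cesaro means converge almost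
   surely.  Cutting the index set into disjoint blocks of length n, each block lies in a set T of
   positive measure independently with probability (measure T)^n, so almost surely every run
   length is realised inside T; with T = [1/4, 1/2) and T = (-1/2, -1/4] this rules out
   convergence.
   By Lorentz's theorem a bounded sequence lies in c0_hat iff its block means tend to 0 uniformly
   in the starting index: averaging over a block does not change a Banach limit, and conversely
   limits of block means along a free ultrafilter are Banach limits.  This description of c0_hat
   makes it measurable, and long runs in [1/4, 1/2) show that almost no sequence belongs to it. *)

lemma all_pos_iff_all_inverse_Suc:
  assumes mono: "\<And>d e. 0 < d \<Longrightarrow> d \<le> e \<Longrightarrow> P d \<Longrightarrow> P e"
  shows "(\<forall>e>0. P e) \<longleftrightarrow> (\<forall>m::nat. P (1 / real (Suc m)))"
proof
  assume P: "\<forall>m::nat. P (1 / real (Suc m))"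
  show "\<forall>e>0. P e"
  proof (intro allI impI)
    fix e :: real
    assume "0 < e"
    then obtain m where "inverse (real (Suc m)) < e"
      using reals_Archimedean by blast
    then show "P e"
      using mono[of "1 / real (Suc m)" e] P by (simp add: inverse_eq_divide)
  qed
qed simp

lemma mem_linf_iff: "x \<in> linf \<longleftrightarrow> (\<exists>B. \<forall>n. \<bar>x n\<bar> \<le> B)"
  unfolding linf_def bounded_iff by (simp add: real_norm_def)

lemma linf_const: "(\<lambda>n. c) \<in> linf"
  by (auto simp: mem_linf_iff)

lemma linf_add: "x \<in> linf \<Longrightarrow> y \<in> linf \<Longrightarrow> (\<lambda>n. x n + y n) \<in> linf"
  unfolding mem_linf_iff by (metis abs_triangle_ineq add_mono order_trans)

lemma linf_mult: "x \<in> linf \<Longrightarrow> (\<lambda>n. a * x n) \<in> linf"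
  unfolding mem_linf_iff abs_mult by (metis abs_ge_zero mult_left_mono)

lemma linf_shift: "x \<in> linf \<Longrightarrow> (\<lambda>n. x (n + i)) \<in> linf"
  unfolding mem_linf_iff by blast

definition block_mean :: "(nat \<Rightarrow> real) \<Rightarrow> nat \<Rightarrow> nat \<Rightarrow> real" where
  "block_mean x n k = (\<Sum>i<n. x (k + i)) / real n"

lemma abs_block_sum_le:
  assumes "\<And>i. \<bar>x i\<bar> \<le> B"
  shows "\<bar>\<Sum>i<n. x (k + i)\<bar> \<le> real n * B"
proof -
  have "\<bar>\<Sum>i<n. x (k + i)\<bar> \<le> (\<Sum>i<n. \<bar>x (k + i)\<bar>)"
    by (rule sum_abs)
  also have "\<dots> \<le> (\<Sum>i<n. B)"
    by (intro sum_mono assms)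
  finally show ?thesis
    by simp
qed

lemma abs_block_mean_le:
  assumes B: "\<And>i. \<bar>x i\<bar> \<le> B"
  shows "\<bar>block_mean x n k\<bar> \<le> B"
proof (cases "n = 0")
  case True
  then show ?thesis
    using B[of 0] by (simp add: block_mean_def)
next
  case False
  then show ?thesis
    using abs_block_sum_le[where n=n and k=k, OF B] by (simp add: block_mean_def field_simps)
qed

lemma block_mean_ge:
  assumes "0 < n" and "\<And>i. i < n \<Longrightarrow> c \<le> x (k + i)"
  shows "c \<le> block_mean x n k"
proof -
  have "(\<Sum>i<n. c) \<le> (\<Sum>i<n. x (k + i))"
    using assms(2) by (intro sum_mono) simp
  then show ?thesis
    using assms(1) by (simp add: block_mean_def field_simps)
qed

lemma block_mean_shift:
  "block_mean (\<lambda>i. x (Suc i)) n k - block_mean x n k = (x (k + n) - x k) / real n"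
proof -
  have "(\<Sum>i<n. x (Suc (k + i))) - (\<Sum>i<n. x (k + i)) = (\<Sum>i<n. x (k + Suc i) - x (k + i))"
    by (simp add: sum_subtractf)
  also have "\<dots> = x (k + n) - x k"
    using sum_lessThan_telescope[of "\<lambda>i. x (k + i)" n] by simp
  finally show ?thesis
    by (simp add: block_mean_def diff_divide_distrib[symmetric])
qed

definition uniformly_cesaro_null :: "(nat \<Rightarrow> real) \<Rightarrow> bool" where
  "uniformly_cesaro_null x \<longleftrightarrow> uniform_limit UNIV (block_mean x) (\<lambda>_. 0) sequentially"

lemma uniformly_cesaro_null_iff_inverse_Suc:
  "uniformly_cesaro_null x \<longleftrightarrow>
     (\<forall>m. eventually (\<lambda>n. \<forall>k. \<bar>block_mean x n k\<bar> < 1 / real (Suc m)) sequentially)"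
  unfolding uniformly_cesaro_null_def uniform_limit_iff dist_real_def
  by (subst all_pos_iff_all_inverse_Suc) (auto elim!: eventually_mono intro: less_le_trans)

lemma pred_uniformly_cesaro_null [measurable]:
  fixes f :: "'a \<Rightarrow> nat \<Rightarrow> real"
  assumes [measurable]: "\<And>i. (\<lambda>\<omega>. f \<omega> i) \<in> borel_measurable M"
  shows "Measurable.pred M (\<lambda>\<omega>. uniformly_cesaro_null (f \<omega>))"
  unfolding uniformly_cesaro_null_iff_inverse_Suc block_mean_def by measurable

definition has_long_runs_in :: "'a set \<Rightarrow> (nat \<Rightarrow> 'a) \<Rightarrow> bool" where
  "has_long_runs_in T x \<longleftrightarrow> (\<forall>n. \<exists>k. \<forall>i<n. x (k + i) \<in> T)"

lemma not_uniformly_cesaro_null_if_long_runs: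
  assumes "0 < c" and "has_long_runs_in {c..} x"
  shows "\<not> uniformly_cesaro_null x"
proof
  assume "uniformly_cesaro_null x"
  then obtain N where N: "\<And>n k. N \<le> n \<Longrightarrow> \<bar>block_mean x n k\<bar> < c"
    using \<open>0 < c\<close> unfolding uniformly_cesaro_null_def uniform_limit_iff eventually_sequentially
    by (fastforce simp: dist_real_def)
  obtain k where "\<forall>i<Suc N. c \<le> x (k + i)"
    using \<open>has_long_runs_in {c..} x\<close> unfolding has_long_runs_in_def by blast
  then have "c \<le> block_mean x (Suc N) k"
    by (intro block_mean_ge) auto
  with N[of "Suc N" k] show False
    by simp
qed

lemma not_convergent_if_long_runs:
  fixes x :: "nat \<Rightarrow> real"
  assumes "d < c" and "has_long_runs_in {c..} x" and "has_long_runs_in {..d} x"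
  shows "\<not> convergent x"
proof
  assume "convergent x"
  then obtain l where "x \<longlonglongrightarrow> l"
    by (auto simp: convergent_def)
  moreover define e where "e = (c - d) / 2"
  moreover have "0 < e" and e: "2 * e = c - d"
    using \<open>d < c\<close> by (simp_all add: e_def)
  ultimately obtain N where N: "\<And>n. N \<le> n \<Longrightarrow> \<bar>x n - l\<bar> < e"
    unfolding LIMSEQ_iff by (metis real_norm_def)
  obtain a b where "\<forall>i<Suc N. c \<le> x (a + i)" and "\<forall>i<Suc N. x (b + i) \<le> d"
    using assms(2,3) unfolding has_long_runs_in_def by (metis atLeast_iff atMost_iff)
  then have "c \<le> x (a + N)" and "x (b + N) \<le> d"
    by auto
  with N[OF le_add2, of a] N[OF le_add2, of b] e show False
    by linarith
qed

section \<open>Banach limits\<close>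

lemma
  assumes "banach_limit L"
  shows banach_limit_add: "x \<in> linf \<Longrightarrow> y \<in> linf \<Longrightarrow> L (\<lambda>n. x n + y n) = L x + L y"
    and banach_limit_mult: "x \<in> linf \<Longrightarrow> L (\<lambda>n. a * x n) = a * L x"
    and banach_limit_nonneg: "x \<in> linf \<Longrightarrow> (\<And>n. 0 \<le> x n) \<Longrightarrow> 0 \<le> L x"
    and banach_limit_shift: "x \<in> linf \<Longrightarrow> L (\<lambda>n. x (Suc n)) = L x"
    and banach_limit_one: "L (\<lambda>n. 1) = 1"
  using assms unfolding banach_limit_def by blast+

lemma banach_limit_const:
  assumes "banach_limit L"
  shows "L (\<lambda>n. c) = c"
  using banach_limit_mult[OF assms linf_const, of c 1] banach_limit_one[OF assms] by simp

lemma banach_limit_diff: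
  assumes L: "banach_limit L" and "x \<in> linf" "y \<in> linf"
  shows "L (\<lambda>n. x n - y n) = L x - L y"
  using banach_limit_add[OF L \<open>x \<in> linf\<close> linf_mult[OF \<open>y \<in> linf\<close>, of "-1"]]
    banach_limit_mult[OF L \<open>y \<in> linf\<close>, of "-1"]
  by simp

lemma banach_limit_mono:
  assumes L: "banach_limit L" and "x \<in> linf" "y \<in> linf" and "\<And>n. x n \<le> y n"
  shows "L x \<le> L y"
proof -
  have "(\<lambda>n. y n - x n) \<in> linf"
    using linf_add[OF \<open>y \<in> linf\<close> linf_mult[OF \<open>x \<in> linf\<close>, of "-1"]] by simp
  then have "0 \<le> L (\<lambda>n. y n - x n)"
    using assms by (intro banach_limit_nonneg[OF L]) auto
  then show ?thesis
    using banach_limit_diff[OF L \<open>y \<in> linf\<close> \<open>x \<in> linf\<close>] by simp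
qed

lemma banach_limit_abs_le:
  assumes L: "banach_limit L" and "x \<in> linf" and "\<And>n. \<bar>x n\<bar> \<le> c"
  shows "\<bar>L x\<bar> \<le> c"
proof -
  have "x n \<le> c" "- c \<le> x n" for n
    using assms(3)[of n] by auto
  then have "L x \<le> L (\<lambda>n. c)" "L (\<lambda>n. - c) \<le> L x"
    by (auto intro!: banach_limit_mono[OF L] \<open>x \<in> linf\<close> linf_const)
  then show ?thesis
    by (simp add: banach_limit_const[OF L] abs_le_iff)
qed

lemma banach_limit_shift_add:
  assumes L: "banach_limit L" and "x \<in> linf"
  shows "L (\<lambda>n. x (n + i)) = L x"
proof (induction i)
  case (Suc i)
  have "L (\<lambda>n. x (n + Suc i)) = L (\<lambda>n. x (Suc n + i))"
    by simp
  also have "\<dots> = L (\<lambda>n. x (n + i))"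
    using banach_limit_shift[OF L linf_shift[OF \<open>x \<in> linf\<close>]] .
  finally show ?case
    using Suc by simp
qed simp

lemma linf_block_sum: "x \<in> linf \<Longrightarrow> (\<lambda>k. \<Sum>i<n. x (k + i)) \<in> linf"
  unfolding mem_linf_iff using abs_block_sum_le by blast

lemma linf_block_mean: "x \<in> linf \<Longrightarrow> block_mean x n \<in> linf"
  unfolding mem_linf_iff using abs_block_mean_le by blast

lemma banach_limit_block_sum:
  assumes L: "banach_limit L" and "x \<in> linf"
  shows "L (\<lambda>k. \<Sum>i<n. x (k + i)) = real n * L x"
proof (induction n)
  case 0
  show ?case
    using banach_limit_const[OF L, of 0] by simp
next
  case (Suc n)
  have "L (\<lambda>k. \<Sum>i<Suc n. x (k + i)) = L (\<lambda>k. (\<Sum>i<n. x (k + i)) + x (k + n))"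
    by simp
  also have "\<dots> = real n * L x + L x"
    using banach_limit_add[OF L linf_block_sum linf_shift] \<open>x \<in> linf\<close>
    by (simp add: Suc.IH banach_limit_shift_add[OF L])
  finally show ?case
    by (simp add: algebra_simps)
qed

lemma banach_limit_block_mean:
  assumes L: "banach_limit L" and "x \<in> linf" and "0 < n"
  shows "L (block_mean x n) = L x"
proof -
  have "L (block_mean x n) = L (\<lambda>k. (1 / real n) * (\<Sum>i<n. x (k + i)))"
    unfolding block_mean_def[abs_def] by simp
  also have "\<dots> = 1 / real n * (real n * L x)"
    by (simp only: banach_limit_mult[OF L linf_block_sum[OF \<open>x \<in> linf\<close>]]
        banach_limit_block_sum[OF L \<open>x \<in> linf\<close>])
  finally show ?thesis
    using \<open>0 < n\<close> by simp
qed

lemma banach_limit_eq_0_if_uniformly_cesaro_null: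
  assumes L: "banach_limit L" and "x \<in> linf" and "uniformly_cesaro_null x"
  shows "L x = 0"
proof -
  have "\<bar>L x\<bar> \<le> e" if "0 < e" for e
  proof -
    obtain N where N: "\<And>n k. N \<le> n \<Longrightarrow> \<bar>block_mean x n k\<bar> < e"
      using \<open>uniformly_cesaro_null x\<close> \<open>0 < e\<close>
      unfolding uniformly_cesaro_null_def uniform_limit_iff eventually_sequentially
      by (fastforce simp: dist_real_def)
    have "\<bar>block_mean x (Suc N) k\<bar> \<le> e" for k
      using N[of "Suc N" k] by fastforce
    then have "\<bar>L (block_mean x (Suc N))\<bar> \<le> e"
      by (intro banach_limit_abs_le[OF L linf_block_mean[OF \<open>x \<in> linf\<close>]])
    then show ?thesis
      using banach_limit_block_mean[OF assms(1,2)] by simp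
  qed
  then show ?thesis
    using field_le_epsilon[of "\<bar>L x\<bar>" 0] by simp
qed

section \<open>Ultrafilters\<close>

definition ultrafilter :: "'a filter \<Rightarrow> bool" where
  "ultrafilter F \<longleftrightarrow> F \<noteq> bot \<and> (\<forall>P. eventually P F \<or> eventually (\<lambda>x. \<not> P x) F)"

lemma Inf_chain_neq_bot:
  fixes C :: "'a filter set"
  assumes "C \<noteq> {}" and "bot \<notin> C" and chain: "\<And>F G. F \<in> C \<Longrightarrow> G \<in> C \<Longrightarrow> F \<le> G \<or> G \<le> F"
  shows "Inf C \<noteq> bot"
proof
  assume "Inf C = bot"
  have "\<exists>H\<in>C. H \<le> inf F G" if "F \<in> C" "G \<in> C" for F G
    using chain[OF that] that by (meson le_inf_iff order_refl)
  with \<open>Inf C = bot\<close> obtain F where "F \<in> C" "eventually (\<lambda>_. False) F"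
    using eventually_Inf_base[OF \<open>C \<noteq> {}\<close>, of "\<lambda>_. False"] by auto
  with \<open>bot \<notin> C\<close> show False
    by (simp add: eventually_False)
qed

lemma ex_ultrafilter_le:
  fixes G :: "'a filter"
  assumes "G \<noteq> bot"
  shows "\<exists>F. ultrafilter F \<and> F \<le> G"
proof -
  define A where "A = {F. F \<noteq> bot \<and> F \<le> G}"
  have "partial_order_on A (relation_of (\<lambda>F F'. F' \<le> F) A)"
    by (auto simp: relation_of_def partial_order_on_def preorder_on_def refl_on_def trans_def antisym_def)
  moreover have "\<exists>U\<in>A. \<forall>F\<in>C. U \<le> F" if "C \<in> Chains (relation_of (\<lambda>F F'. F' \<le> F) A)" for C
  proof (cases "C = {}")
    case True
    then show ?thesis
      using \<open>G \<noteq> bot\<close> by (auto simp: A_def)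
  next
    case False
    have "C \<subseteq> A" and chain: "\<And>F F'. F \<in> C \<Longrightarrow> F' \<in> C \<Longrightarrow> F \<le> F' \<or> F' \<le> F"
      using that by (auto simp: Chains_def relation_of_def)
    then have "Inf C \<noteq> bot"
      using False by (intro Inf_chain_neq_bot) (auto simp: A_def)
    moreover obtain F where "F \<in> C"
      using False by blast
    ultimately have "Inf C \<in> A"
      using \<open>C \<subseteq> A\<close> by (auto simp: A_def intro: Inf_lower2)
    then show ?thesis
      by (auto intro: Inf_lower)
  qed
  ultimately obtain U where "U \<in> A" and max: "\<And>F. F \<in> A \<Longrightarrow> F \<le> U \<Longrightarrow> F = U"
    using predicate_Zorn[of A "\<lambda>F F'. F' \<le> F"] by blast
  have "eventually P U" if "\<not> eventually (\<lambda>x. \<not> P x) U" for P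
  proof -
    have "inf U (principal {x. P x}) \<in> A"
      using that \<open>U \<in> A\<close> by (auto simp: A_def trivial_limit_def eventually_inf_principal intro: le_infI1)
    then have "inf U (principal {x. P x}) = U"
      using max[OF _ inf_le1] by blast
    moreover have "eventually P (inf U (principal {x. P x}))"
      by (simp add: eventually_inf_principal)
    ultimately show ?thesis
      by simp
  qed
  with \<open>U \<in> A\<close> show ?thesis
    by (auto simp: ultrafilter_def A_def)
qed

lemma ultrafilter_tendsto_compact:
  assumes "ultrafilter F" and "compact K" and "eventually (\<lambda>j. f j \<in> K) F"
  shows "\<exists>l. (f \<longlongrightarrow> l) F"
proof -
  have "filtermap f F \<noteq> bot"
    using \<open>ultrafilter F\<close> by (simp add: ultrafilter_def filtermap_bot_iff)
  then obtain l where l: "inf (nhds l) (filtermap f F) \<noteq> bot"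
    using \<open>compact K\<close> assms(3) unfolding compact_filter by (auto simp: eventually_filtermap)
  have "eventually (\<lambda>j. f j \<in> S) F" if "open S" "l \<in> S" for S
  proof (rule ccontr)
    assume "\<not> eventually (\<lambda>j. f j \<in> S) F"
    then have "eventually (\<lambda>j. f j \<notin> S) F"
      using \<open>ultrafilter F\<close> by (auto simp: ultrafilter_def)
    then have "eventually (\<lambda>y. y \<notin> S) (inf (nhds l) (filtermap f F))"
      by (intro filter_leD[OF inf_le2]) (simp add: eventually_filtermap)
    moreover have "eventually (\<lambda>y. y \<in> S) (inf (nhds l) (filtermap f F))"
      using that by (intro filter_leD[OF inf_le1] eventually_nhds_in_open)
    ultimately have "eventually (\<lambda>_. False) (inf (nhds l) (filtermap f F))"
      by eventually_elim simp
    with l show False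
      by (simp add: eventually_False)
  qed
  then show ?thesis
    by (auto simp: tendsto_def)
qed

section \<open>Lorentz's description of c0_hat\<close>

lemma block_mean_add: "block_mean (\<lambda>i. x i + y i) n k = block_mean x n k + block_mean y n k"
  by (simp add: block_mean_def sum.distrib add_divide_distrib)

lemma block_mean_mult: "block_mean (\<lambda>i. a * x i) n k = a * block_mean x n k"
  by (simp add: block_mean_def sum_distrib_left)

definition block_limit :: "nat filter \<Rightarrow> (nat \<Rightarrow> nat) \<Rightarrow> (nat \<Rightarrow> nat) \<Rightarrow> (nat \<Rightarrow> real) \<Rightarrow> real" where
  "block_limit F n k x = Lim F (\<lambda>j. block_mean x (n j) (k j))"

lemma block_limit_eqI:
  "ultrafilter F \<Longrightarrow> ((\<lambda>j. block_mean x (n j) (k j)) \<longlongrightarrow> a) F \<Longrightarrow> block_limit F n k x = a"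
  by (simp add: block_limit_def ultrafilter_def tendsto_Lim)

lemma tendsto_block_limit:
  assumes F: "ultrafilter F" and "x \<in> linf"
  shows "((\<lambda>j. block_mean x (n j) (k j)) \<longlongrightarrow> block_limit F n k x) F"
proof -
  obtain B where "\<And>i. \<bar>x i\<bar> \<le> B"
    using \<open>x \<in> linf\<close> by (auto simp: mem_linf_iff)
  then have "eventually (\<lambda>j. block_mean x (n j) (k j) \<in> cball 0 B) F"
    by (simp add: abs_block_mean_le)
  then obtain l where "((\<lambda>j. block_mean x (n j) (k j)) \<longlongrightarrow> l) F"
    using ultrafilter_tendsto_compact[OF F compact_cball, where f = "\<lambda>j. block_mean x (n j) (k j)"]
    by blast
  then show ?thesis
    using block_limit_eqI[OF F] by simp
qed

lemma banach_limit_block_limit: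
  assumes F: "ultrafilter F" and n: "filterlim n at_top F"
  shows "banach_limit (block_limit F n k)"
  unfolding banach_limit_def
proof (intro conjI ballI allI impI)
  have "F \<noteq> bot"
    using F by (simp add: ultrafilter_def)
  note lim = tendsto_block_limit[OF F]
  fix x y a
  assume x: "x \<in> linf"
  show "block_limit F n k (\<lambda>i. a * x i) = a * block_limit F n k x"
    using lim[OF x] by (intro block_limit_eqI[OF F]) (simp add: block_mean_mult tendsto_mult_left)
  show "0 \<le> block_limit F n k x" if "\<forall>i. 0 \<le> x i"
    using that \<open>F \<noteq> bot\<close>
    by (intro tendsto_lowerbound[OF lim[OF x]] always_eventually) (simp add: block_mean_def sum_nonneg)
  show "block_limit F n k (\<lambda>i. x (Suc i)) = block_limit F n k x"
  proof (rule block_limit_eqI[OF F])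
    (* a shift changes a block mean by (x (k + n) - x k) / n, and n tends to infinity along F *)
    obtain B where B: "\<And>i. \<bar>x i\<bar> \<le> B"
      using x by (auto simp: mem_linf_iff)
    have bound: "\<forall>j. norm ((x (k j + n j) - x (k j)) / real (n j)) \<le> 2 * B / real (n j)"
    proof
      fix j
      have "\<bar>x (k j + n j) - x (k j)\<bar> \<le> 2 * B"
        using B[of "k j + n j"] B[of "k j"] by linarith
      then show "norm ((x (k j + n j) - x (k j)) / real (n j)) \<le> 2 * B / real (n j)"
        by (simp add: abs_divide divide_right_mono)
    qed
    have "filterlim (\<lambda>j. real (n j)) at_infinity F"
      by (intro filterlim_at_top_imp_at_infinity filterlim_compose[OF filterlim_real_sequentially n])
    then have "((\<lambda>j. 2 * B / real (n j)) \<longlongrightarrow> 0) F"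
      by (intro tendsto_divide_0[OF tendsto_const])
    with always_eventually[OF bound] have "((\<lambda>j. (x (k j + n j) - x (k j)) / real (n j)) \<longlongrightarrow> 0) F"
      by (rule Lim_null_comparison)
    then have "((\<lambda>j. block_mean x (n j) (k j) + (x (k j + n j) - x (k j)) / real (n j))
        \<longlongrightarrow> block_limit F n k x + 0) F"
      by (intro tendsto_add lim[OF x])
    moreover have "block_mean (\<lambda>i. x (Suc i)) (n j) (k j)
        = block_mean x (n j) (k j) + (x (k j + n j) - x (k j)) / real (n j)" for j
      using block_mean_shift[of x "n j" "k j"] by linarith
    ultimately show "((\<lambda>j. block_mean (\<lambda>i. x (Suc i)) (n j) (k j)) \<longlongrightarrow> block_limit F n k x) F"
      by simp
  qed
  assume y: "y \<in> linf"
  show "block_limit F n k (\<lambda>i. x i + y i) = block_limit F n k x + block_limit F n k y"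
    using lim[OF x] lim[OF y] by (intro block_limit_eqI[OF F]) (simp add: block_mean_add tendsto_add)
next
  have "eventually (\<lambda>j. 1 \<le> n j) F"
    using n by (simp add: filterlim_at_top)
  then have "eventually (\<lambda>j. block_mean (\<lambda>_. 1) (n j) (k j) = 1) F"
    by eventually_elim (simp add: block_mean_def)
  then show "block_limit F n k (\<lambda>_. 1) = 1"
    by (intro block_limit_eqI[OF F] tendsto_eventually)
qed

lemma ex_banach_limit_neq_0:
  assumes "x \<in> linf" and "\<not> uniformly_cesaro_null x"
  shows "\<exists>L. banach_limit L \<and> L x \<noteq> 0"
proof -
  obtain e where "0 < e" and "\<forall>N. \<exists>m\<ge>N. \<exists>k. e \<le> \<bar>block_mean x m k\<bar>"
    using assms(2) unfolding uniformly_cesaro_null_def uniform_limit_iff eventually_sequentially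
    by (auto simp: dist_real_def not_less)
  then obtain n k where n: "\<And>N. N \<le> n N" and e: "\<And>N. e \<le> \<bar>block_mean x (n N) (k N)\<bar>"
    by metis
  (* the witnessing windows get arbitrarily long, so a free ultrafilter turns them into a Banach limit *)
  obtain F where F: "ultrafilter F" and "F \<le> sequentially"
    using ex_ultrafilter_le[OF sequentially_bot] by blast
  have "filterlim n at_top sequentially"
    using n by (intro filterlim_at_top_mono[OF filterlim_ident]) auto
  then have "filterlim n at_top F"
    using \<open>F \<le> sequentially\<close> by (rule filterlim_mono[OF _ order_refl])
  moreover have "e \<le> \<bar>block_limit F n k x\<bar>"
    using F e by (intro tendsto_lowerbound[OF tendsto_rabs[OF tendsto_block_limit[OF F \<open>x \<in> linf\<close>]]])
      (auto simp: ultrafilter_def)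
  ultimately show ?thesis
    using banach_limit_block_limit[OF F] \<open>0 < e\<close> by (intro exI[of _ "block_limit F n k"]) auto
qed

lemma c0_hat_iff_uniformly_cesaro_null:
  "x \<in> linf \<Longrightarrow> x \<in> c0_hat \<longleftrightarrow> uniformly_cesaro_null x"
  using banach_limit_eq_0_if_uniformly_cesaro_null ex_banach_limit_neq_0
  unfolding c0_hat_def by blast

section \<open>Sequences of independent identically distributed variables\<close>

lemma (in sequence_space) indep_vars_components:
  "prob_space.indep_vars S (\<lambda>_. M) (\<lambda>i \<omega>. \<omega> i) UNIV"
proof -
  have "distr S (\<Pi>\<^sub>M i\<in>UNIV. M) (\<lambda>\<omega>. \<lambda>i\<in>UNIV. \<omega> i) = (\<Pi>\<^sub>M i\<in>UNIV. distr S M (\<lambda>\<omega>. \<omega> i))"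
    by (simp add: PiM_component restrict_UNIV)
  then show ?thesis
    by (subst P.indep_vars_iff_distr_eq_PiM) auto
qed

lemma (in sequence_space) prob_no_run_in_blocks:
  assumes T: "T \<in> sets M"
  shows "measure S {\<omega> \<in> space S. \<forall>j<J. \<exists>i\<in>{j * n..<j * n + n}. \<omega> i \<notin> T} = (1 - measure M T ^ n) ^ J"
proof (cases "J = 0")
  case True
  then show ?thesis
    by (simp add: P.prob_space)
next
  case False
  define K where "K j = {j * n..<j * n + n}" for j
  define A where "A j = space (\<Pi>\<^sub>M i\<in>K j. M) - (\<Pi>\<^sub>E i\<in>K j. T)" for j
  have "i div n = j" if "i \<in> K j" for i j
    using that unfolding K_def by (intro div_nat_eqI) (auto simp: mult.commute)
  then have "disjoint_family K"
    unfolding disjoint_family_on_def by blast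
  then have indep: "P.indep_vars (\<lambda>j. \<Pi>\<^sub>M i\<in>K j. M) (\<lambda>j \<omega>. restrict \<omega> (K j)) UNIV"
    using P.indep_vars_restrict[OF indep_vars_components] by simp
  have A: "A j \<in> sets (\<Pi>\<^sub>M i\<in>K j. M)" for j
    using T by (auto simp: A_def K_def intro!: sets.compl_sets sets_PiM_I_finite)
  have vimage_A: "(\<lambda>\<omega>. restrict \<omega> (K j)) -` A j \<inter> space S = space S - {\<omega> \<in> space S. \<forall>i\<in>K j. \<omega> i \<in> T}" for j
    by (auto simp: A_def space_PiM PiE_iff)
  have "measure S {\<omega> \<in> space S. \<forall>i\<in>K j. \<omega> i \<in> T} = measure M T ^ n" for j
    using emeasure_PiM_Collect[of "K j" "\<lambda>_. T"] T
    by (simp add: K_def P.emeasure_eq_measure M.emeasure_eq_measure ennreal_power)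
  then have prob_A: "measure S ((\<lambda>\<omega>. restrict \<omega> (K j)) -` A j \<inter> space S) = 1 - measure M T ^ n" for j
    using T by (simp add: vimage_A P.prob_compl)
  have "{\<omega> \<in> space S. \<forall>j<J. \<exists>i\<in>{j * n..<j * n + n}. \<omega> i \<notin> T}
      = (\<Inter>j\<in>{..<J}. (\<lambda>\<omega>. restrict \<omega> (K j)) -` A j \<inter> space S)"
    unfolding vimage_A using False by (auto simp: K_def)
  also have "measure S \<dots> = (\<Prod>j<J. measure S ((\<lambda>\<omega>. restrict \<omega> (K j)) -` A j \<inter> space S))"
    using False A by (intro P.indep_varsD[OF indep]) auto
  also have "\<dots> = (1 - measure M T ^ n) ^ J"
    by (simp only: prob_A prod_constant card_lessThan)
  finally show ?thesis .
qed

lemma (in sequence_space) AE_has_long_runs_in: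
  assumes T[measurable]: "T \<in> sets M" and "0 < measure M T"
  shows "AE \<omega> in S. has_long_runs_in T \<omega>"
proof -
  have "AE \<omega> in S. \<exists>k. \<forall>i<n. \<omega> (k + i) \<in> T" for n
  proof (rule AE_I')
    define N where "N = {\<omega> \<in> space S. \<forall>j. \<exists>i\<in>{j * n..<j * n + n}. \<omega> i \<notin> T}"
    define q where "q = measure M T ^ n"
    have [measurable]: "N \<in> sets S"
      unfolding N_def by measurable
    have bound: "measure S N \<le> (1 - q) ^ J" for J
    proof -
      have "measure S N \<le> measure S {\<omega> \<in> space S. \<forall>j<J. \<exists>i\<in>{j * n..<j * n + n}. \<omega> i \<notin> T}"
        by (intro P.finite_measure_mono) (auto simp: N_def)
      then show ?thesis
        by (simp add: prob_no_run_in_blocks q_def)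
    qed
    have "0 < q" and "q \<le> 1"
      using \<open>0 < measure M T\<close> by (auto simp: q_def power_le_one)
    then have "(\<lambda>J. (1 - q) ^ J) \<longlonglongrightarrow> 0"
      by (intro LIMSEQ_power_zero) simp
    then have "measure S N \<le> 0"
      by (rule LIMSEQ_le_const) (use bound in blast)
    then show "N \<in> null_sets S"
      by (simp add: null_sets_def P.emeasure_eq_measure measure_le_0_iff)
    show "{\<omega> \<in> space S. \<not> (\<exists>k. \<forall>i<n. \<omega> (k + i) \<in> T)} \<subseteq> N"
    proof safe
      fix \<omega> assume "\<omega> \<in> space S" and no_run: "\<not> (\<exists>k. \<forall>i<n. \<omega> (k + i) \<in> T)"
      have "\<exists>i\<in>{j * n..<j * n + n}. \<omega> i \<notin> T" for j
        using no_run[unfolded not_ex, rule_format, of "j * n"] by (auto intro: bexI[of _ "j * n + _"])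
      with \<open>\<omega> \<in> space S\<close> show "\<omega> \<in> N"
        by (simp add: N_def)
    qed
  qed
  then show ?thesis
    unfolding has_long_runs_in_def by (simp add: AE_all_countable)
qed

lemma (in prob_space) AE_LIMSEQ_if_summable_prob_deviation:
  fixes f :: "nat \<Rightarrow> 'a \<Rightarrow> real"
  assumes [measurable]: "\<And>n. f n \<in> borel_measurable M"
    and summable: "\<And>e. 0 < e \<Longrightarrow> summable (\<lambda>n. prob {\<omega> \<in> space M. e \<le> \<bar>f n \<omega> - c\<bar>})"
  shows "AE \<omega> in M. (\<lambda>n. f n \<omega>) \<longlonglongrightarrow> c"
proof -
  have "AE \<omega> in M. eventually (\<lambda>n. \<bar>f n \<omega> - c\<bar> < 1 / real (Suc m)) sequentially" for m
  proof -
    have "AE \<omega> in M. eventually (\<lambda>n. \<omega> \<in> space M - {\<omega> \<in> space M. 1 / real (Suc m) \<le> \<bar>f n \<omega> - c\<bar>}) sequentially"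
      using summable[of "1 / real (Suc m)"] by (intro borel_cantelli_AE1) (simp_all add: emeasure_eq_measure)
    then show ?thesis
      by eventually_elim (auto elim!: eventually_mono)
  qed
  then have "AE \<omega> in M. \<forall>m. eventually (\<lambda>n. \<bar>f n \<omega> - c\<bar> < 1 / real (Suc m)) sequentially"
    by (simp add: AE_all_countable)
  then show ?thesis
  proof eventually_elim
    case (elim \<omega>)
    then show ?case
      unfolding tendsto_iff dist_real_def
      by (subst all_pos_iff_all_inverse_Suc) (auto elim!: eventually_mono)
  qed
qed

lemma AE_convergent_cesaro_mean_PiM:
  fixes M :: "real measure"
  assumes "prob_space M" and sets_M: "sets M = sets borel" and "a < b"
    and bounded: "AE x in M. x \<in> {a..b}"
  shows "AE \<omega> in \<Pi>\<^sub>M i\<in>UNIV. M. convergent (\<lambda>n. (\<Sum>i<Suc n. \<omega> i) / real (Suc n))"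
proof -
  interpret sequence_space M
    unfolding sequence_space_def by (rule product_prob_spaceI) (rule assms(1))
  have component[measurable]: "(\<lambda>\<omega>. \<omega> i) \<in> borel_measurable S" for i
    using measurable_component_singleton[of i UNIV "\<lambda>_. M"] by (simp add: measurable_cong_sets[OF refl sets_M])
  have indep: "P.indep_vars (\<lambda>_. borel) (\<lambda>i \<omega>. \<omega> i) UNIV"
    using indep_vars_components unfolding P.indep_vars_def by (simp add: sets_M measurable_cong_sets[OF refl sets_M])
  have distr_component: "distr S borel (\<lambda>\<omega>. \<omega> i) = M" for i
    using PiM_component[of i] by (simp add: distr_cong[OF refl sets_M[symmetric]])
  define c where "c = P.expectation (\<lambda>\<omega>. \<omega> 0)"
  have Hoeffding: "P.prob {\<omega> \<in> space S. e \<le> \<bar>(\<Sum>i<Suc n. \<omega> i) / real (Suc n) - c\<bar>}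
      \<le> 2 * exp (- 2 * e\<^sup>2 / (b - a)\<^sup>2) ^ Suc n" if "0 \<le> e" for e n
  proof -
    interpret Hoeffding_ineq_iid S "{..<Suc n}" "\<lambda>i \<omega>. \<omega> i" "\<lambda>\<omega>. \<omega> 0" a b c
    proof unfold_locales
      show "P.indep_vars (\<lambda>_. borel) (\<lambda>i \<omega>. \<omega> i) {..<Suc n}"
        using indep by (rule P.indep_vars_subset) simp
      show "AE \<omega> in S. \<omega> 0 \<in> {a..b}"
        by (rule AE_component[OF UNIV_I bounded])
    qed (simp_all add: c_def distr_component)
    have "- 2 * real (Suc n) * e\<^sup>2 / (b - a)\<^sup>2 = real (Suc n) * (- 2 * e\<^sup>2 / (b - a)\<^sup>2)"
      by (simp only: times_divide_eq_right mult.left_commute mult.assoc)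
    then have exponent: "exp (- 2 * real (Suc n) * e\<^sup>2 / (b - a)\<^sup>2) = exp (- 2 * e\<^sup>2 / (b - a)\<^sup>2) ^ Suc n"
      by (simp only: exp_of_nat_mult)
    have "{..<Suc n} \<noteq> {}"
      by auto
    from Hoeffding_ineq_abs_ge'[OF that \<open>a < b\<close> this] show ?thesis
      unfolding card_lessThan exponent .
  qed
  have "AE \<omega> in S. (\<lambda>n. (\<Sum>i<Suc n. \<omega> i) / real (Suc n)) \<longlonglongrightarrow> c"
  proof (rule P.AE_LIMSEQ_if_summable_prob_deviation)
    fix e :: real
    assume "0 < e"
    then have "exp (- 2 * e\<^sup>2 / (b - a)\<^sup>2) < 1"
      using \<open>a < b\<close> by simp
    then have "summable (\<lambda>n. 2 * exp (- 2 * e\<^sup>2 / (b - a)\<^sup>2) ^ Suc n)"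
      by (intro summable_mult summable_ignore_initial_segment[of _ 1, simplified] summable_geometric) simp
    then show "summable (\<lambda>n. P.prob {\<omega> \<in> space S. e \<le> \<bar>(\<Sum>i<Suc n. \<omega> i) / real (Suc n) - c\<bar>})"
      by (rule summable_comparison_test') (use Hoeffding \<open>0 < e\<close> in simp)
  qed measurable
  then show ?thesis
    by eventually_elim (auto simp: convergent_def)
qed

interpretation mu_seq: sequence_space "uniform_measure lborel {-1/2<..<1/2::real}"
  unfolding sequence_space_def by (intro product_prob_spaceI prob_space_uniform_measure) auto

lemma measurable_mu_component [measurable]: "(\<lambda>x. x i) \<in> borel_measurable mu"
  unfolding mu_def by measurable

lemma AE_mu_cube: "AE x in mu. x \<in> cube"
proof -
  have "AE x in mu. x n \<in> {-1/2<..<1/2}" for n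
    unfolding mu_def by (intro mu_seq.AE_component AE_uniform_measureI) auto
  then show ?thesis
    unfolding cube_def by (simp add: AE_all_countable)
qed

lemma AE_mu_long_runs: "AE x in mu. has_long_runs_in {1/4..} x \<and> has_long_runs_in {..-1/4} x"
proof -
  have "{-1/2<..<1/2} \<inter> {1/4..} = {1/4..<1/2::real}" and "{-1/2<..<1/2} \<inter> {..-1/4} = {-1/2<..-1/4::real}"
    by auto
  then show ?thesis
    unfolding mu_def AE_conj_iff by (intro conjI mu_seq.AE_has_long_runs_in) simp_all
qed

lemma AE_mu_convergent_cesaro_mean: "AE x in mu. convergent (\<lambda>n. (\<Sum>i<Suc n. x i) / real (Suc n))"
  unfolding mu_def
  by (rule AE_convergent_cesaro_mean_PiM[of _ "-1/2" "1/2"])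
     (auto intro: prob_space_uniform_measure AE_uniform_measureI)

lemma AE_mu_not_convergent: "AE x in mu. \<not> convergent x \<and> \<not> uniformly_cesaro_null x"
  using AE_mu_long_runs
proof eventually_elim
  case (elim x)
  show ?case
  proof
    show "\<not> convergent x"
      by (rule not_convergent_if_long_runs[of "-1/4" "1/4"]) (use elim in simp_all)
    show "\<not> uniformly_cesaro_null x"
      by (rule not_uniformly_cesaro_null_if_long_runs[of "1/4"]) (use elim in simp_all)
  qed
qed

lemma prob_space_mu: "prob_space mu"
  unfolding mu_def by (intro prob_space_PiM prob_space_uniform_measure) auto

lemma space_mu: "space mu = UNIV"
  by (simp add: mu_def space_PiM)

lemma cube_subset_linf: "cube \<subseteq> linf"
proof
  fix x
  assume "x \<in> cube"
  then have "\<bar>x n\<bar> \<le> 1/2" for n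
    unfolding cube_def by (auto simp: abs_le_iff dest!: spec[of _ n])
  then show "x \<in> linf"
    unfolding mem_linf_iff by blast
qed

lemma sets_mu_cube [measurable]: "cube \<in> sets mu"
proof -
  have "{x \<in> space mu. \<forall>n. x n \<in> {-1/2<..<1/2}} \<in> sets mu"
    by measurable
  then show ?thesis
    by (simp add: cube_def space_mu)
qed

theorem corollary4p2:
  shows "cesaro_seqs \<inter> cube \<in> sets mu \<and> measure mu (cesaro_seqs \<inter> cube) = 1 \<and>
         null_seqs \<inter> cube \<in> sets mu \<and> measure mu (null_seqs \<inter> cube) = 0 \<and>
         conv_seqs \<inter> cube \<in> sets mu \<and> measure mu (conv_seqs \<inter> cube) = 0 \<and>
         c0_hat \<inter> cube \<in> sets mu \<and> measure mu (c0_hat \<inter> cube) = 0"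
proof -
  have eqs: "cesaro_seqs \<inter> cube = cube \<inter> {x \<in> space mu. Cauchy (\<lambda>n. (\<Sum>i<Suc n. x i) / real (Suc n))}"
    "null_seqs \<inter> cube = cube \<inter> {x \<in> space mu. x \<longlonglongrightarrow> 0}"
    "conv_seqs \<inter> cube = cube \<inter> {x \<in> space mu. Cauchy x}"
    "c0_hat \<inter> cube = cube \<inter> {x \<in> space mu. uniformly_cesaro_null x}"
    using cube_subset_linf
    by (auto simp: space_mu cesaro_seqs_def null_seqs_def conv_seqs_def Cauchy_convergent_iff
        c0_hat_iff_uniformly_cesaro_null)
  then have sets: "cesaro_seqs \<inter> cube \<in> sets mu" "null_seqs \<inter> cube \<in> sets mu"
    "conv_seqs \<inter> cube \<in> sets mu" "c0_hat \<inter> cube \<in> sets mu"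
    by simp_all measurable
  interpret prob_space mu
    by (rule prob_space_mu)
  have "AE x in mu. x \<in> cesaro_seqs \<inter> cube"
    using AE_mu_cube AE_mu_convergent_cesaro_mean
    by eventually_elim (auto simp: eqs space_mu Cauchy_convergent_iff)
  moreover have "AE x in mu. x \<notin> null_seqs \<inter> cube \<and> x \<notin> conv_seqs \<inter> cube \<and> x \<notin> c0_hat \<inter> cube"
    using AE_mu_not_convergent by eventually_elim (auto simp: eqs convergent_def Cauchy_convergent_iff)
  ultimately show ?thesis
    using sets AE_in_set_eq_1[OF sets(1)] prob_eq_0_AE[of "\<lambda>x. x \<in> _"]
    by (auto simp: space_mu elim: eventually_mono)
qed

end
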